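(* Let $\underline\lambda=(\lambda^1,1^m)$ be a bipartition of $n$ whose second component is a single column, so that $M^{\underline\lambda}$ is an $\mathcal R_n$-module. For every standard bitableau $U=(U^1,U^2)$ of shape $\underline\lambda$ and every $1\le i\le n$, $$L_iv_U=\epsilon_i\,\mathbf q^{c_U(i)}v_U,\qquad \epsilon_i=\begin{cases}1& i\in U^1\\ 0& i\in U^2.\end{cases}$$
   Context: $\mathbf q$ is an indeterminate. $\mathcal R_n$ is the generic mirabolic Hecke algebra over $\mathbb C(\mathbf q)$, identified with $\mathcal H_n(1,0)/I_n^{(\emptyset,2)}$, where $\mathcal H_n(1,0)$ has generators $X,T_1,\dots,T_{n-1}$ (Hecke relations, $XT_i=T_iX$ for $i\ge2$, $XT_1XT_1=T_1XT_1X$, $X^2=X$), $I_n^{(\emptyset,2)}$ is generated by $1-X+T_1-XT_1-T_1X+XT_1X-T_1XT_1+XT_1XT_1$, and $e\in\mathcal R_n$ is the image of $X$. The Jucys–Murphy elements of $\mathcal R_n$ are $L_i=\mathbf q^{1-i}T_{i-1}\cdots T_1eT_1\cdots T_{i-1}$, $i=1,\dots,n$. Standard bitableaux, contents $c_U(i)=(j-1)+(\text{column}-\text{row of } i \text{ in } U^j)$ for $i\in U^j$, and the modules $M^{\underline\lambda}$ with basis $\{v_U\}$ are as in Ariki–Koike: $Xv_U=v_U$ if $1\in U^1$, $0$ if $1\in U^2$; $T_iv_U=\mathbf q v_U$ (same row, same tableau), $-v_U$ (same column, same tableau), $\frac{\mathbf q-1}{1-\mathbf q^{d}}v_U+(1+\frac{\mathbf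 q-1}{1-\mathbf q^{d}})v_{s_i(U)}$ with $d=c_U(i)-c_U(i+1)$ (same tableau otherwise), $v_{s_i(U)}$ ($i\in U^1,i+1\in U^2$), $(\mathbf q-1)v_U+\mathbf q v_{s_i(U)}$ ($i\in U^2,i+1\in U^1$). *)

theory Defs
  imports "HOL-Computational_Algebra.Polynomial" "HOL-Computational_Algebra.Fraction_Field"
begin

(* Ground field C(q): rational functions in the indeterminate q over the complex numbers. *)
type_synonym K = "complex poly fract"

definition qq :: K where "qq = Fract [:0, 1:] 1"

(* A bitableau U is recorded as the map sending an entry k in {1..n} to the cell it occupies:
   (j, r, c) = (component j in {1,2}, row r, column c), rows/columns 0-indexed.
   Outside {1..n} the map is normalised to (0,0,0) so that tableaux are unique. *)
type_synonym bitab = "nat \<Rightarrow> nat \<times> nat \<times> nat"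

definition is_partition :: "nat list \<Rightarrow> bool" where
  "is_partition l \<longleftrightarrow> sorted_wrt (\<ge>) l \<and> (\<forall>x\<in>set l. 0 < x)"

definition bicells :: "nat list \<Rightarrow> nat \<Rightarrow> (nat \<times> nat \<times> nat) set" where
  "bicells lam1 m = {(1, r, c) | r c. r < length lam1 \<and> c < lam1 ! r} \<union> {(2, r, 0) | r. r < m}"

definition comp :: "bitab \<Rightarrow> nat \<Rightarrow> nat" where "comp U k = fst (U k)"
definition row :: "bitab \<Rightarrow> nat \<Rightarrow> nat" where "row U k = fst (snd (U k))"
definition col :: "bitab \<Rightarrow> nat \<Rightarrow> nat" where "col U k = snd (snd (U k))"

definition std_bitab :: "nat \<Rightarrow> nat list \<Rightarrow> nat \<Rightarrow> bitab set" where
  "std_bitab n lam1 m = {U. bij_betw U {1..n} (bicells lam1 m)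
     \<and> (\<forall>k. k \<notin> {1..n} \<longrightarrow> U k = (0, 0, 0))
     \<and> (\<forall>a\<in>{1..n}. \<forall>b\<in>{1..n}. comp U a = comp U b \<and> row U a = row U b \<and> col U a < col U b \<longrightarrow> a < b)
     \<and> (\<forall>a\<in>{1..n}. \<forall>b\<in>{1..n}. comp U a = comp U b \<and> col U a = col U b \<and> row U a < row U b \<longrightarrow> a < b)}"

definition tab_content :: "bitab \<Rightarrow> nat \<Rightarrow> int" where
  "tab_content U k = (int (comp U k) - 1) + (int (col U k) - int (row U k))"

definition swapU :: "nat \<Rightarrow> bitab \<Rightarrow> bitab" where
  "swapU i U = (\<lambda>k. if k = i then U (Suc i) else if k = Suc i then U i else U k)"

(* vectors of M^lambda are coefficient functions on bitableaux; v_U is the basis vector *)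
definition vb :: "bitab \<Rightarrow> bitab \<Rightarrow> K" where
  "vb U = (\<lambda>W. if W = U then 1 else 0)"

definition Tb :: "nat \<Rightarrow> bitab \<Rightarrow> bitab \<Rightarrow> K" where
  "Tb i U =
    (if comp U i = 1 \<and> comp U (Suc i) = 2 then vb (swapU i U)
     else if comp U i = 2 \<and> comp U (Suc i) = 1 then (\<lambda>W. (qq - 1) * vb U W + qq * vb (swapU i U) W)
     else if row U i = row U (Suc i) then (\<lambda>W. qq * vb U W)
     else if col U i = col U (Suc i) then (\<lambda>W. - vb U W)
     else (let a = (qq - 1) / (1 - qq powi (tab_content U i - tab_content U (Suc i)))
           in (\<lambda>W. a * vb U W + (1 + a) * vb (swapU i U) W)))"

definition Xb :: "bitab \<Rightarrow> bitab \<Rightarrow> K" where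
  "Xb U = (if comp U 1 = 1 then vb U else (\<lambda>_. 0))"

definition lin :: "bitab set \<Rightarrow> (bitab \<Rightarrow> bitab \<Rightarrow> K) \<Rightarrow> (bitab \<Rightarrow> K) \<Rightarrow> (bitab \<Rightarrow> K)" where
  "lin S f v = (\<lambda>W. \<Sum>U\<in>S. v U * f U W)"

(* action of the Jucys--Murphy element L_i = q^(1-i) T_{i-1}...T_1 e T_1...T_{i-1} on M^lambda *)
definition Lop :: "nat \<Rightarrow> nat list \<Rightarrow> nat \<Rightarrow> nat \<Rightarrow> (bitab \<Rightarrow> K) \<Rightarrow> (bitab \<Rightarrow> K)" where
  "Lop n lam1 m i v =
    (let S = std_bitab n lam1 m;
         ops = map (\<lambda>j. lin S (Tb j)) (rev [1..<i]) @ [lin S Xb] @ map (\<lambda>j. lin S (Tb j)) [1..<i]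
     in (\<lambda>W. qq powi (1 - int i) * foldr (\<lambda>g w. g w) ops v W))"

definition eps :: "bitab \<Rightarrow> nat \<Rightarrow> K" where
  "eps U k = (if comp U k = 1 then 1 else 0)"

end

theory Submission
  imports Defs
begin

(* Write F_i for the unnormalised product T_{i-1}...T_1 e T_1...T_{i-1} (jm_raw below), so that
   F_1 = e and F_{i+1} = T_i F_i T_i.  We prove by induction on i that every basis vector v_U
   is an eigenvector of F_i with eigenvalue eps_U(i) q^(c_U(i) + i - 1) (jm_eigenvalue below);
   the theorem follows after multiplying by q^(1-i). *)

section \<open>The indeterminate q\<close>

lemma qq_nonzero: "qq \<noteq> 0"
  by (simp add: qq_def Zero_fract_def eq_fract)

(* q^k is the polynomial X^k, of degree k, hence q^k = 1 forces k = 0. *)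
lemma qq_pow_ne_one:
  assumes "k > 0"
  shows "qq ^ k \<noteq> 1"
proof
  assume "qq ^ k = 1"
  moreover have "qq ^ k = Fract ([:0, 1:] ^ k) 1"
    by (induct k) (simp_all add: qq_def One_fract_def)
  ultimately have "([:0, 1:] :: complex poly) ^ k = 1"
    by (simp add: One_fract_def eq_fract)
  hence "degree (([:0, 1:] :: complex poly) ^ k) = 0" by simp
  thus False using assms by (simp add: degree_power_eq)
qed

(* q is not a root of unity: this makes the denominators 1 - q^d in the action of T_i nonzero. *)
lemma qq_powi_ne_one:
  assumes "d \<noteq> 0"
  shows "qq powi d \<noteq> 1"
proof (cases "d \<ge> 0")
  case True
  thus ?thesis using assms qq_pow_ne_one[of "nat d"] by (simp add: power_int_def)
next
  case False
  thus ?thesis using qq_pow_ne_one[of "nat (-d)"] qq_nonzero by (simp add: power_int_def power_inverse)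
qed

lemma qq_powi_add: "qq powi (a + b) = qq powi a * qq powi b"
  using qq_nonzero by (simp add: power_int_add)

(* Passing from F_k to F_{k+1} shifts the exponent c + k - 1 by one. *)
lemma qq_powi_shift: "qq powi (c + int (Suc k) - 1) = qq * qq powi (c + int k - 1)"
proof -
  have "c + int (Suc k) - 1 = 1 + (c + int k - 1)" by simp
  thus ?thesis by (simp only: qq_powi_add power_int_1_right)
qed

section \<open>The unnormalised Jucys--Murphy operators\<close>

definition jm_raw :: "bitab set \<Rightarrow> nat \<Rightarrow> (bitab \<Rightarrow> K) \<Rightarrow> (bitab \<Rightarrow> K)" where
  "jm_raw S i v = foldr (\<lambda>g w. g w)
     (map (\<lambda>j. lin S (Tb j)) (rev [1..<i]) @ [lin S Xb] @ map (\<lambda>j. lin S (Tb j)) [1..<i]) v"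

lemma Lop_conv_jm_raw:
  "Lop n lam1 m i v = (\<lambda>W. qq powi (1 - int i) * jm_raw (std_bitab n lam1 m) i v W)"
  by (simp add: Lop_def jm_raw_def Let_def)

lemma jm_raw_1: "jm_raw S 1 v = lin S Xb v"
  by (simp add: jm_raw_def)

lemma jm_raw_Suc: "1 \<le> i \<Longrightarrow> jm_raw S (Suc i) v = lin S (Tb i) (jm_raw S i (lin S (Tb i) v))"
  by (simp add: jm_raw_def)

lemma lin_vb:
  assumes "finite S" "U \<in> S"
  shows "lin S f (vb U) = f U"
proof -
  have "\<And>W. (\<Sum>U'\<in>S. vb U U' * f U' W) = (\<Sum>U'\<in>S. if U' = U then f U W else 0)"
    by (rule sum.cong) (auto simp: vb_def)
  thus ?thesis using assms unfolding lin_def by (intro ext) simp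
qed

lemma lin_combination: "lin S f (\<lambda>W. a * x W + b * y W) = (\<lambda>W. a * lin S f x W + b * lin S f y W)"
  by (simp add: lin_def fun_eq_iff algebra_simps sum.distrib sum_distrib_left)

lemma foldr_lin_combination:
  assumes "\<forall>g\<in>set gs. \<exists>f. g = lin S f"
  shows "foldr (\<lambda>g w. g w) gs (\<lambda>W. a * x W + b * y W)
       = (\<lambda>W. a * foldr (\<lambda>g w. g w) gs x W + b * foldr (\<lambda>g w. g w) gs y W)"
  using assms by (induct gs) (auto simp: lin_combination)

lemma jm_raw_combination:
  "jm_raw S i (\<lambda>W. a * x W + b * y W) = (\<lambda>W. a * jm_raw S i x W + b * jm_raw S i y W)"
  unfolding jm_raw_def by (rule foldr_lin_combination) auto

(* If v_U, v_V span a T_i-stable plane on which F_i is diagonal, then T_i F_i T_i v_U is given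
   by the product of the corresponding 2x2 matrices. *)
lemma jm_raw_Suc_pair:
  assumes i: "1 \<le> i" and S: "finite S" "U \<in> S" "V \<in> S"
    and TU: "Tb i U = (\<lambda>W. a * vb U W + b * vb V W)"
    and TV: "Tb i V = (\<lambda>W. c * vb V W + d * vb U W)"
    and FU: "jm_raw S i (vb U) = (\<lambda>W. eU * vb U W)"
    and FV: "jm_raw S i (vb V) = (\<lambda>W. eV * vb V W)"
  shows "jm_raw S (Suc i) (vb U)
     = (\<lambda>W. (a * eU * a + b * eV * d) * vb U W + (a * eU * b + b * eV * c) * vb V W)"
proof -
  have "jm_raw S i (lin S (Tb i) (vb U)) = (\<lambda>W. (a * eU) * vb U W + (b * eV) * vb V W)"
    using S by (simp add: lin_vb TU jm_raw_combination FU FV algebra_simps)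
  hence "jm_raw S (Suc i) (vb U) = (\<lambda>W. (a * eU) * Tb i U W + (b * eV) * Tb i V W)"
    using S by (simp add: jm_raw_Suc[OF i] lin_combination lin_vb)
  also have "\<dots> = (\<lambda>W. (a * eU * a + b * eV * d) * vb U W + (a * eU * b + b * eV * c) * vb V W)"
    by (simp add: TU TV fun_eq_iff algebra_simps)
  finally show ?thesis .
qed

lemma jm_raw_Suc_fixed:
  assumes i: "1 \<le> i" and S: "finite S" "U \<in> S"
    and TU: "Tb i U = (\<lambda>W. c * vb U W)"
    and FU: "jm_raw S i (vb U) = (\<lambda>W. e * vb U W)"
  shows "jm_raw S (Suc i) (vb U) = (\<lambda>W. (c * c * e) * vb U W)"
proof -
  have TU': "Tb i U = (\<lambda>W. c * vb U W + 0 * vb U W)" using TU by simp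
  show ?thesis
    using jm_raw_Suc_pair[OF i S(1,2,2) TU' TU' FU FU] by (simp add: algebra_simps)
qed

section \<open>Standard bitableaux of shape (lambda^1, 1^m)\<close>

lemma bicells_iff: "x \<in> bicells lam1 m \<longleftrightarrow>
   (fst x = 1 \<and> fst (snd x) < length lam1 \<and> snd (snd x) < lam1 ! fst (snd x)) \<or>
   (fst x = 2 \<and> fst (snd x) < m \<and> snd (snd x) = 0)"
  by (cases x) (auto simp: bicells_def)

lemma finite_bicells: "finite (bicells lam1 m)"
proof -
  have "bicells lam1 m = (\<lambda>(r, c). (1::nat, r, c)) ` (SIGMA r:{..<length lam1}. {..<lam1 ! r})
      \<union> (\<lambda>r. (2, r, 0)) ` {..<m}"
    by (auto simp: bicells_def image_iff)
  thus ?thesis by simp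
qed

lemma finite_std_bitab: "finite (std_bitab n lam1 m)"
proof -
  have "std_bitab n lam1 m \<subseteq> {U. \<forall>k. (k \<in> {1..n} \<longrightarrow> U k \<in> bicells lam1 m)
                                      \<and> (k \<notin> {1..n} \<longrightarrow> U k = (0, 0, 0))}"
    unfolding std_bitab_def by (auto intro: bij_betw_apply)
  moreover have "finite {U. \<forall>k. (k \<in> {1..n} \<longrightarrow> U k \<in> bicells lam1 m)
                                 \<and> (k \<notin> {1..n} \<longrightarrow> U k = (0, 0, 0))}"
    by (rule finite_set_of_finite_funs) (simp_all add: finite_bicells)
  ultimately show ?thesis by (rule finite_subset)
qed

lemma std_cell:
  assumes "U \<in> std_bitab n lam1 m" "k \<in> {1..n}"
  shows "(comp U k = 1 \<and> row U k < length lam1 \<and> col U k < lam1 ! row U k) \<or>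
         (comp U k = 2 \<and> row U k < m \<and> col U k = 0)"
proof -
  have "U k \<in> bicells lam1 m"
    using assms bij_betw_apply unfolding std_bitab_def by fastforce
  thus ?thesis by (simp add: bicells_iff comp_def row_def col_def)
qed

lemma std_surj:
  assumes "U \<in> std_bitab n lam1 m" "(j, r, c) \<in> bicells lam1 m"
  obtains k where "k \<in> {1..n}" "comp U k = j" "row U k = r" "col U k = c"
proof -
  have "U ` {1..n} = bicells lam1 m" using assms(1) unfolding std_bitab_def bij_betw_def by simp
  then obtain k where "k \<in> {1..n}" "U k = (j, r, c)" using assms(2) by (metis imageE)
  thus ?thesis using that by (simp add: comp_def row_def col_def)
qed

lemma std_inj:
  assumes "U \<in> std_bitab n lam1 m" "a \<in> {1..n}" "b \<in> {1..n}"
    "comp U a = comp U b" "row U a = row U b" "col U a = col U b"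
  shows "a = b"
proof -
  have "inj_on U {1..n}" using assms(1) unfolding std_bitab_def bij_betw_def by simp
  moreover have "U a = U b"
    using assms(4-6) by (simp add: comp_def row_def col_def prod_eq_iff)
  ultimately show ?thesis using assms(2,3) by (rule inj_onD)
qed

lemma std_row_increasing:
  assumes "U \<in> std_bitab n lam1 m" "a \<in> {1..n}" "b \<in> {1..n}"
    "comp U a = comp U b" "row U a = row U b" "col U a < col U b"
  shows "a < b"
proof -
  have "\<forall>a\<in>{1..n}. \<forall>b\<in>{1..n}. comp U a = comp U b \<and> row U a = row U b \<and> col U a < col U b \<longrightarrow> a < b"
    using assms(1) unfolding std_bitab_def mem_Collect_eq by (elim conjE)
  thus ?thesis using assms(2-6) by blast
qed

lemma std_col_increasing:
  assumes "U \<in> std_bitab n lam1 m" "a \<in> {1..n}" "b \<in> {1..n}"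
    "comp U a = comp U b" "col U a = col U b" "row U a < row U b"
  shows "a < b"
proof -
  have "\<forall>a\<in>{1..n}. \<forall>b\<in>{1..n}. comp U a = comp U b \<and> col U a = col U b \<and> row U a < row U b \<longrightarrow> a < b"
    using assms(1) unfolding std_bitab_def mem_Collect_eq by (elim conjE)
  thus ?thesis using assms(2-6) by blast
qed

(* If i and i+1 share a row, they are adjacent in a row of U^1 (rows of U^2 have length one),
   so c_U(i+1) = c_U(i) + 1. *)
lemma content_same_row:
  assumes U: "U \<in> std_bitab n lam1 m" and i: "1 \<le> i" "Suc i \<le> n"
    and c: "comp U i = comp U (Suc i)" and r: "row U i = row U (Suc i)"
  shows "comp U i = 1" "tab_content U (Suc i) = tab_content U i + 1"
proof -
  have ii: "i \<in> {1..n}" "Suc i \<in> {1..n}" using i by auto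
  have "col U i \<noteq> col U (Suc i)" using std_inj[OF U ii c r] by auto
  moreover have "\<not> col U (Suc i) < col U i" using std_row_increasing[OF U ii(2) ii(1)] c r by fastforce
  ultimately have lt: "col U i < col U (Suc i)" by simp
  show c1: "comp U i = 1" using std_cell[OF U ii(1)] std_cell[OF U ii(2)] c lt by auto
  have "col U (Suc i) = Suc (col U i)"
  proof (rule ccontr)
    assume "col U (Suc i) \<noteq> Suc (col U i)"
    hence gap: "Suc (col U i) < col U (Suc i)" using lt by simp
    have "(1, row U i, Suc (col U i)) \<in> bicells lam1 m"
      using std_cell[OF U ii(2)] c c1 r gap by (auto simp: bicells_iff)
    then obtain k where k: "k \<in> {1..n}" "comp U k = 1" "row U k = row U i" "col U k = Suc (col U i)"
      using std_surj[OF U] by blast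
    have "i < k" using std_row_increasing[OF U ii(1) k(1)] k c1 by simp
    moreover have "k < Suc i" using std_row_increasing[OF U k(1) ii(2)] k c1 c r gap by simp
    ultimately show False by simp
  qed
  thus "tab_content U (Suc i) = tab_content U i + 1" using c r by (simp add: tab_content_def)
qed

(* If i and i+1 share a column of U^1, they are vertically adjacent, so c_U(i+1) = c_U(i) - 1;
   the cell below i exists because the rows of a partition weakly decrease. *)
lemma content_same_col:
  assumes P: "is_partition lam1" and U: "U \<in> std_bitab n lam1 m" and i: "1 \<le> i" "Suc i \<le> n"
    and c: "comp U i = 1" "comp U (Suc i) = 1" and r: "col U i = col U (Suc i)"
  shows "tab_content U (Suc i) = tab_content U i - 1"
proof -
  have ii: "i \<in> {1..n}" "Suc i \<in> {1..n}" using i by auto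
  have "row U i \<noteq> row U (Suc i)" using std_inj[OF U ii _ _ r] c by auto
  moreover have "\<not> row U (Suc i) < row U i" using std_col_increasing[OF U ii(2) ii(1)] c r by fastforce
  ultimately have lt: "row U i < row U (Suc i)" by simp
  have "row U (Suc i) = Suc (row U i)"
  proof (rule ccontr)
    assume "row U (Suc i) \<noteq> Suc (row U i)"
    hence gap: "Suc (row U i) < row U (Suc i)" using lt by simp
    have cell: "row U (Suc i) < length lam1" "col U (Suc i) < lam1 ! row U (Suc i)"
      using std_cell[OF U ii(2)] c by auto
    have "lam1 ! row U (Suc i) \<le> lam1 ! Suc (row U i)"
      using P gap cell(1) unfolding is_partition_def by (auto dest: sorted_wrt_nth_less)
    hence "(1, Suc (row U i), col U i) \<in> bicells lam1 m"
      using cell gap r by (auto simp: bicells_iff)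
    then obtain k where k: "k \<in> {1..n}" "comp U k = 1" "row U k = Suc (row U i)" "col U k = col U i"
      using std_surj[OF U] by blast
    have "i < k" using std_col_increasing[OF U ii(1) k(1)] k c by simp
    moreover have "k < Suc i" using std_col_increasing[OF U k(1) ii(2)] k c r gap by simp
    ultimately show False by simp
  qed
  thus ?thesis using c r by (simp add: tab_content_def)
qed

(* If i, i+1 lie in U^1 but neither in a common row nor in a common column, then they are not on
   a common diagonal: the cell completing the rectangle would have to lie strictly between them. *)
lemma content_distinct:
  assumes U: "U \<in> std_bitab n lam1 m" and i: "1 \<le> i" "Suc i \<le> n"
    and c: "comp U i = 1" "comp U (Suc i) = 1"
    and r: "row U i \<noteq> row U (Suc i)" and cc: "col U i \<noteq> col U (Suc i)"
  shows "tab_content U i \<noteq> tab_content U (Suc i)"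
proof
  assume eq: "tab_content U i = tab_content U (Suc i)"
  have ii: "i \<in> {1..n}" "Suc i \<in> {1..n}" using i by auto
  have cell1: "row U i < length lam1" "col U i < lam1 ! row U i" using std_cell[OF U ii(1)] c by auto
  have cell2: "row U (Suc i) < length lam1" "col U (Suc i) < lam1 ! row U (Suc i)"
    using std_cell[OF U ii(2)] c by auto
  show False
  proof (cases "row U i < row U (Suc i)")
    case True
    hence lt: "col U i < col U (Suc i)" using eq c by (simp add: tab_content_def)
    have "(1, row U (Suc i), col U i) \<in> bicells lam1 m" using cell2 lt by (auto simp: bicells_iff)
    then obtain k where k: "k \<in> {1..n}" "comp U k = 1" "row U k = row U (Suc i)" "col U k = col U i"
      using std_surj[OF U] by blast
    have "i < k" using std_col_increasing[OF U ii(1) k(1)] k c True by simp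
    moreover have "k < Suc i" using std_row_increasing[OF U k(1) ii(2)] k c lt by simp
    ultimately show False by simp
  next
    case False
    hence gt: "row U (Suc i) < row U i" using r by simp
    hence lt: "col U (Suc i) < col U i" using eq c by (simp add: tab_content_def)
    have "(1, row U i, col U (Suc i)) \<in> bicells lam1 m" using cell1 lt by (auto simp: bicells_iff)
    then obtain k where k: "k \<in> {1..n}" "comp U k = 1" "row U k = row U i" "col U k = col U (Suc i)"
      using std_surj[OF U] by blast
    have "k < i" using std_row_increasing[OF U k(1) ii(1)] k c lt by simp
    moreover have "Suc i < k" using std_col_increasing[OF U ii(2) k(1)] k c gt by simp
    ultimately show False by simp
  qed
qed

(* If 1 lies in U^1 it occupies the corner cell (1,0,0), whose content is 0. *)
lemma content_first:
  assumes P: "is_partition lam1" and U: "U \<in> std_bitab n lam1 m" and n: "1 \<le> n"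
    and c: "comp U 1 = 1"
  shows "tab_content U 1 = 0"
proof -
  have one: "1 \<in> {1..n}" using n by auto
  have cell: "row U 1 < length lam1" "col U 1 < lam1 ! row U 1" using std_cell[OF U one] c by auto
  have col0: "col U 1 = 0"
  proof (rule ccontr)
    assume nz: "col U 1 \<noteq> 0"
    hence "(1, row U 1, 0) \<in> bicells lam1 m" using cell by (auto simp: bicells_iff)
    then obtain k where k: "k \<in> {1..n}" "comp U k = 1" "row U k = row U 1" "col U k = 0"
      using std_surj[OF U] by blast
    have "k < 1" using std_row_increasing[OF U k(1) one] k c nz by simp
    thus False using k(1) by simp
  qed
  have row0: "row U 1 = 0"
  proof (rule ccontr)
    assume nz: "row U 1 \<noteq> 0"
    have "lam1 ! row U 1 \<le> lam1 ! 0"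
      using P nz cell(1) unfolding is_partition_def by (auto dest: sorted_wrt_nth_less)
    hence "(1, 0, 0) \<in> bicells lam1 m" using cell by (auto simp: bicells_iff)
    then obtain k where k: "k \<in> {1..n}" "comp U k = 1" "row U k = 0" "col U k = 0"
      using std_surj[OF U] by blast
    have "k < 1" using std_col_increasing[OF U k(1) one] k c col0 nz by simp
    thus False using k(1) by simp
  qed
  show ?thesis using c col0 row0 by (simp add: tab_content_def)
qed

lemma swapU_simps [simp]:
  "comp (swapU i U) i = comp U (Suc i)" "comp (swapU i U) (Suc i) = comp U i"
  "row (swapU i U) i = row U (Suc i)" "row (swapU i U) (Suc i) = row U i"
  "col (swapU i U) i = col U (Suc i)" "col (swapU i U) (Suc i) = col U i"
  "tab_content (swapU i U) i = tab_content U (Suc i)"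
  "tab_content (swapU i U) (Suc i) = tab_content U i"
  "swapU i (swapU i U) = U"
  by (simp_all add: swapU_def comp_def row_def col_def tab_content_def fun_eq_iff)

(* s_i U is again standard unless i and i+1 lie in a common row or a common column of U:
   s_i U = U o sigma for the transposition sigma = (i i+1), which only reverses the order of
   the pair (i, i+1). *)
lemma std_swapU:
  assumes U: "U \<in> std_bitab n lam1 m" and i: "1 \<le> i" "Suc i \<le> n"
    and nr: "\<not> (comp U i = comp U (Suc i) \<and> row U i = row U (Suc i))"
    and nc: "\<not> (comp U i = comp U (Suc i) \<and> col U i = col U (Suc i))"
  shows "swapU i U \<in> std_bitab n lam1 m"
proof -
  define \<sigma> where "\<sigma> = (\<lambda>k::nat. if k = i then Suc i else if k = Suc i then i else k)"
  have swap: "swapU i U = U \<circ> \<sigma>" by (simp add: swapU_def \<sigma>_def fun_eq_iff)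
  have \<sigma>_in: "\<And>k. k \<in> {1..n} \<Longrightarrow> \<sigma> k \<in> {1..n}" using i by (auto simp: \<sigma>_def)
  have \<sigma>_out: "\<And>k. k \<notin> {1..n} \<Longrightarrow> \<sigma> k = k" using i by (auto simp: \<sigma>_def)
  have \<sigma>_order: "\<And>a b. \<sigma> a < \<sigma> b \<Longrightarrow> a < b \<or> (a = Suc i \<and> b = i)"
    by (auto simp: \<sigma>_def split: if_splits)
  have "bij_betw \<sigma> {1..n} {1..n}"
    by (rule bij_betw_byWitness[where f' = \<sigma>]) (use \<sigma>_in i in \<open>auto simp: \<sigma>_def\<close>)
  hence bij: "bij_betw (swapU i U) {1..n} (bicells lam1 m)"
    using U unfolding swap std_bitab_def by (auto intro: bij_betw_trans)
  have out: "\<forall>k. k \<notin> {1..n} \<longrightarrow> swapU i U k = (0, 0, 0)"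
    using U \<sigma>_out unfolding swap std_bitab_def by simp
  have coords: "comp (swapU i U) k = comp U (\<sigma> k)" "row (swapU i U) k = row U (\<sigma> k)"
    "col (swapU i U) k = col U (\<sigma> k)" for k
    by (simp_all add: comp_def row_def col_def swap)
  have rows: "a < b"
    if "a \<in> {1..n}" "b \<in> {1..n}" "comp (swapU i U) a = comp (swapU i U) b"
       "row (swapU i U) a = row (swapU i U) b" "col (swapU i U) a < col (swapU i U) b" for a b
  proof -
    have "\<sigma> a < \<sigma> b" using std_row_increasing[OF U \<sigma>_in \<sigma>_in] that coords by simp
    thus ?thesis using \<sigma>_order that(3,4) nr coords by (fastforce simp: \<sigma>_def)
  qed
  have cols: "a < b"
    if "a \<in> {1..n}" "b \<in> {1..n}" "comp (swapU i U) a = comp (swapU i U) b"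
       "col (swapU i U) a = col (swapU i U) b" "row (swapU i U) a < row (swapU i U) b" for a b
  proof -
    have "\<sigma> a < \<sigma> b" using std_col_increasing[OF U \<sigma>_in \<sigma>_in] that coords by simp
    thus ?thesis using \<sigma>_order that(3,4) nc coords by (fastforce simp: \<sigma>_def)
  qed
  show ?thesis unfolding std_bitab_def using bij out rows cols by blast
qed

section \<open>The eigenvalues of F_i\<close>

definition jm_eigenvalue :: "bitab \<Rightarrow> nat \<Rightarrow> K" where
  "jm_eigenvalue U k = eps U k * qq powi (tab_content U k + int k - 1)"

lemma jm_eigenvalue_Suc:
  "jm_eigenvalue U (Suc k) = eps U (Suc k) * (qq * qq powi (tab_content U (Suc k) + int k - 1))"
  by (simp only: jm_eigenvalue_def qq_powi_shift)

(* The coefficients of T_i in the generic case: with a = (q-1)/(1-x), the matrix of T_i on the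
   pair (U, s_i U) is ((a, 1+a), (1+a', a')) where a' = (q-1)/(1-x^{-1}) = -x a. *)
lemma generic_coefficient_inverse:
  fixes x :: K assumes "x \<noteq> 0" "x \<noteq> 1"
  shows "(qq - 1) / (1 - inverse x) = - x * ((qq - 1) / (1 - x))"
proof -
  have "1 - inverse x = (x - 1) / x" using assms by (simp add: field_simps)
  thus ?thesis using assms by (simp add: field_simps)
qed

(* Case i in U^1, i+1 in U^2: F_i kills v_{s_i U}, and so does F_{i+1} on v_U. *)
lemma jm_eigen_step_12:
  assumes U: "U \<in> std_bitab n lam1 m" and k: "1 \<le> k" "Suc k \<le> n"
    and c: "comp U k = 1" "comp U (Suc k) = 2"
    and IH: "\<And>W. W \<in> std_bitab n lam1 m \<Longrightarrow>
               jm_raw (std_bitab n lam1 m) k (vb W) = (\<lambda>X. jm_eigenvalue W k * vb W X)"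
  shows "jm_raw (std_bitab n lam1 m) (Suc k) (vb U) = (\<lambda>X. jm_eigenvalue U (Suc k) * vb U X)"
proof -
  let ?V = "swapU k U"
  have V: "?V \<in> std_bitab n lam1 m" using std_swapU[OF U k] c by simp
  have TU: "Tb k U = (\<lambda>W. 0 * vb U W + 1 * vb ?V W)" using c by (simp add: Tb_def)
  have TV: "Tb k ?V = (\<lambda>W. (qq - 1) * vb ?V W + qq * vb U W)" using c by (simp add: Tb_def)
  have "jm_eigenvalue ?V k = 0" "jm_eigenvalue U (Suc k) = 0"
    using c by (simp_all add: jm_eigenvalue_def eps_def)
  thus ?thesis
    using jm_raw_Suc_pair[OF k(1) finite_std_bitab U V TU TV IH[OF U] IH[OF V]] by simp
qed

(* Case i in U^2, i+1 in U^1: the eigenvalue is transported from v_{s_i U} by a factor q. *)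
lemma jm_eigen_step_21:
  assumes U: "U \<in> std_bitab n lam1 m" and k: "1 \<le> k" "Suc k \<le> n"
    and c: "comp U k = 2" "comp U (Suc k) = 1"
    and IH: "\<And>W. W \<in> std_bitab n lam1 m \<Longrightarrow>
               jm_raw (std_bitab n lam1 m) k (vb W) = (\<lambda>X. jm_eigenvalue W k * vb W X)"
  shows "jm_raw (std_bitab n lam1 m) (Suc k) (vb U) = (\<lambda>X. jm_eigenvalue U (Suc k) * vb U X)"
proof -
  let ?V = "swapU k U"
  have V: "?V \<in> std_bitab n lam1 m" using std_swapU[OF U k] c by simp
  have TU: "Tb k U = (\<lambda>W. (qq - 1) * vb U W + qq * vb ?V W)" using c by (simp add: Tb_def)
  have TV: "Tb k ?V = (\<lambda>W. 0 * vb ?V W + 1 * vb U W)" using c by (simp add: Tb_def)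
  have "jm_eigenvalue U k = 0" using c by (simp add: jm_eigenvalue_def eps_def)
  moreover have "qq * jm_eigenvalue ?V k = jm_eigenvalue U (Suc k)"
    unfolding jm_eigenvalue_Suc using c by (simp add: jm_eigenvalue_def eps_def)
  ultimately show ?thesis
    using jm_raw_Suc_pair[OF k(1) finite_std_bitab U V TU TV IH[OF U] IH[OF V]] by simp
qed

(* Case i, i+1 in a common row: T_i v_U = q v_U and the content grows by one. *)
lemma jm_eigen_step_row:
  assumes U: "U \<in> std_bitab n lam1 m" and k: "1 \<le> k" "Suc k \<le> n"
    and c: "comp U k = comp U (Suc k)" "row U k = row U (Suc k)"
    and IH: "jm_raw (std_bitab n lam1 m) k (vb U) = (\<lambda>X. jm_eigenvalue U k * vb U X)"
  shows "jm_raw (std_bitab n lam1 m) (Suc k) (vb U) = (\<lambda>X. jm_eigenvalue U (Suc k) * vb U X)"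
proof -
  have TU: "Tb k U = (\<lambda>W. qq * vb U W)" using c by (auto simp: Tb_def)
  have c1: "comp U k = 1" "comp U (Suc k) = 1" using content_same_row[OF U k c] c by simp_all
  have "tab_content U (Suc k) + int k - 1 = tab_content U k + int (Suc k) - 1"
    using content_same_row[OF U k c] by simp
  hence "qq powi (tab_content U (Suc k) + int k - 1) = qq * qq powi (tab_content U k + int k - 1)"
    by (simp only: qq_powi_shift)
  hence "qq * qq * jm_eigenvalue U k = jm_eigenvalue U (Suc k)"
    unfolding jm_eigenvalue_Suc using c1 by (simp add: jm_eigenvalue_def eps_def)
  thus ?thesis using jm_raw_Suc_fixed[OF k(1) finite_std_bitab U TU IH] by simp
qed

(* Case i, i+1 in a common column: T_i v_U = -v_U and the eigenvalue does not change. *)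
lemma jm_eigen_step_col:
  assumes P: "is_partition lam1" and U: "U \<in> std_bitab n lam1 m" and k: "1 \<le> k" "Suc k \<le> n"
    and c: "comp U k = comp U (Suc k)" "row U k \<noteq> row U (Suc k)" "col U k = col U (Suc k)"
    and IH: "jm_raw (std_bitab n lam1 m) k (vb U) = (\<lambda>X. jm_eigenvalue U k * vb U X)"
  shows "jm_raw (std_bitab n lam1 m) (Suc k) (vb U) = (\<lambda>X. jm_eigenvalue U (Suc k) * vb U X)"
proof -
  have TU: "Tb k U = (\<lambda>W. (-1) * vb U W)" using c by (auto simp: Tb_def)
  have "jm_eigenvalue U k = jm_eigenvalue U (Suc k)"
  proof (cases "comp U k = 1")
    case True
    thus ?thesis using content_same_col[OF P U k True] c by (simp add: jm_eigenvalue_def eps_def)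
  next
    case False
    thus ?thesis using c by (simp add: jm_eigenvalue_def eps_def)
  qed
  thus ?thesis using jm_raw_Suc_fixed[OF k(1) finite_std_bitab U TU IH] by simp
qed

(* Generic case: T_i mixes v_U and v_{s_i U}; since c_U(i) differs from c_U(i+1), q^(c_U(i) - c_U(i+1))
   is not 1 and the 2x2 computation yields the factor q on the diagonal and 0 off it. *)
lemma jm_eigen_step_generic:
  assumes U: "U \<in> std_bitab n lam1 m" and k: "1 \<le> k" "Suc k \<le> n"
    and c: "comp U k = comp U (Suc k)" "row U k \<noteq> row U (Suc k)" "col U k \<noteq> col U (Suc k)"
    and IH: "\<And>W. W \<in> std_bitab n lam1 m \<Longrightarrow>
               jm_raw (std_bitab n lam1 m) k (vb W) = (\<lambda>X. jm_eigenvalue W k * vb W X)"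
  shows "jm_raw (std_bitab n lam1 m) (Suc k) (vb U) = (\<lambda>X. jm_eigenvalue U (Suc k) * vb U X)"
proof -
  let ?V = "swapU k U"
  have V: "?V \<in> std_bitab n lam1 m" using std_swapU[OF U k] c by simp
  have cells: "k \<in> {1..n}" "Suc k \<in> {1..n}" using k by auto
  have c1: "comp U k = 1" "comp U (Suc k) = 1"
    using std_cell[OF U cells(1)] std_cell[OF U cells(2)] c by auto
  define x where "x = qq powi (tab_content U k - tab_content U (Suc k))"
  define a where "a = (qq - 1) / (1 - x)"
  define e where "e = qq powi (tab_content U (Suc k) + int k - 1)"
  have x1: "x \<noteq> 1"
    unfolding x_def using content_distinct[OF U k c1 c(2,3)] by (simp add: qq_powi_ne_one)
  have x0: "x \<noteq> 0" unfolding x_def using qq_nonzero by simp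
  have TU: "Tb k U = (\<lambda>W. a * vb U W + (1 + a) * vb ?V W)"
    using c by (auto simp: Tb_def Let_def a_def x_def)
  have "qq powi (tab_content U (Suc k) - tab_content U k) = inverse x"
    unfolding x_def by (simp add: power_int_minus[symmetric])
  hence TV: "Tb k ?V = (\<lambda>W. (- x * a) * vb ?V W + (1 + (- x * a)) * vb U W)"
    using c generic_coefficient_inverse[OF x0 x1] by (auto simp: Tb_def Let_def a_def)
  have "jm_eigenvalue U k = x * e"
    using c1 by (simp add: jm_eigenvalue_def eps_def x_def e_def qq_powi_add[symmetric] add_diff_eq)
  hence FU: "jm_raw (std_bitab n lam1 m) k (vb U) = (\<lambda>W. (x * e) * vb U W)" using IH[OF U] by simp
  have FV: "jm_raw (std_bitab n lam1 m) k (vb ?V) = (\<lambda>W. e * vb ?V W)"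
    using IH[OF V] c1 by (simp add: jm_eigenvalue_def eps_def e_def)
  have "a * (x * e) * a + (1 + a) * e * (1 + - x * a) = e * (1 + a * (1 - x))"
    by (simp add: algebra_simps)
  also have "\<dots> = qq * e" using x1 by (simp add: a_def)
  finally have diag: "a * (x * e) * a + (1 + a) * e * (1 + - x * a) = qq * e" .
  have off: "a * (x * e) * (1 + a) + (1 + a) * e * (- x * a) = 0"
    by (simp add: algebra_simps)
  have "qq * e = jm_eigenvalue U (Suc k)"
    unfolding jm_eigenvalue_Suc using c1 by (simp add: eps_def e_def)
  thus ?thesis
    using jm_raw_Suc_pair[OF k(1) finite_std_bitab U V TU TV FU FV] diag off by simp
qed

lemma jm_eigen_step:
  assumes P: "is_partition lam1" and U: "U \<in> std_bitab n lam1 m" and k: "1 \<le> k" "Suc k \<le> n"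
    and IH: "\<And>W. W \<in> std_bitab n lam1 m \<Longrightarrow>
               jm_raw (std_bitab n lam1 m) k (vb W) = (\<lambda>X. jm_eigenvalue W k * vb W X)"
  shows "jm_raw (std_bitab n lam1 m) (Suc k) (vb U) = (\<lambda>X. jm_eigenvalue U (Suc k) * vb U X)"
proof -
  have "k \<in> {1..n}" "Suc k \<in> {1..n}" using k by auto
  then consider "comp U k = 1" "comp U (Suc k) = 2" | "comp U k = 2" "comp U (Suc k) = 1"
    | "comp U k = comp U (Suc k)" "row U k = row U (Suc k)"
    | "comp U k = comp U (Suc k)" "row U k \<noteq> row U (Suc k)" "col U k = col U (Suc k)"
    | "comp U k = comp U (Suc k)" "row U k \<noteq> row U (Suc k)" "col U k \<noteq> col U (Suc k)"
    using std_cell[OF U] by metis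
  thus ?thesis
  proof cases
    case 1
    thus ?thesis by (rule jm_eigen_step_12[OF U k _ _ IH])
  next
    case 2
    thus ?thesis by (rule jm_eigen_step_21[OF U k _ _ IH])
  next
    case 3
    thus ?thesis by (rule jm_eigen_step_row[OF U k _ _ IH[OF U]])
  next
    case 4
    thus ?thesis by (rule jm_eigen_step_col[OF P U k _ _ _ IH[OF U]])
  next
    case 5
    thus ?thesis by (rule jm_eigen_step_generic[OF U k _ _ _ IH])
  qed
qed

lemma jm_raw_eigen:
  assumes P: "is_partition lam1" and k: "1 \<le> k" "k \<le> n" and U: "U \<in> std_bitab n lam1 m"
  shows "jm_raw (std_bitab n lam1 m) k (vb U) = (\<lambda>X. jm_eigenvalue U k * vb U X)"
  using k U
proof (induction k arbitrary: U rule: nat_induct_at_least)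
  case base
  have "jm_raw (std_bitab n lam1 m) 1 (vb U) = Xb U"
    unfolding jm_raw_1 by (rule lin_vb[OF finite_std_bitab base.prems(2)])
  thus ?case
    using content_first[OF P base.prems(2,1)] by (simp add: Xb_def jm_eigenvalue_def eps_def)
next
  case (Suc k)
  thus ?case using jm_eigen_step[OF P Suc.prems(2) Suc.hyps] by simp
qed

theorem mainTheorem10:
  fixes n m i :: nat and lam1 :: "nat list" and U :: bitab
  assumes "is_partition lam1"
    and "sum_list lam1 + m = n"
    and "U \<in> std_bitab n lam1 m"
    and "1 \<le> i" and "i \<le> n"
  shows "Lop n lam1 m i (vb U) = (\<lambda>W. eps U i * qq powi (tab_content U i) * vb U W)"
proof -
  have "qq powi (1 - int i) * jm_eigenvalue U i = eps U i * qq powi (tab_content U i)"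
    by (simp add: jm_eigenvalue_def qq_powi_add[symmetric] algebra_simps)
  thus ?thesis
    unfolding Lop_conv_jm_raw jm_raw_eigen[OF assms(1,4,5,3)] by (simp add: mult.assoc[symmetric])
qed

end
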